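(* Let $G$ be a finitely generated group and $\mathcal H$ a collection of subgroups forming a tight algebraic network inside $G$, and let $G_1$ be the finite-index subgroup of $G$ generated by the subgroups in $\mathcal H$. Then (with respect to a word metric) $G$ is a $(\tau,\eta)$-tight network, for some $\tau,\eta\ge0$, with respect to the collection of left cosets $\mathcal L=\{gH: g\in G_1,\ H\in\mathcal H\}$.
   Context: $G$ carries a word metric for a finite generating set. $\mathcal N_R(A)$ is the open $R$-neighborhood, $B(x,R)$ the open ball. A $(\lambda,\kappa)$-quasi-geodesic is a map $q$ from a connected subset of $\mathbb R$ with $\frac1\lambda|s-t|-\kappa\le\mathrm{dist}(q(s),q(t))\le\lambda|s-t|+\kappa$. A subset $A$ is $(C,L)$-quasi-convex if any two of its points are joined by an $(L,L)$-quasi-geodesic in $\mathcal N_C(A)$, and $M$-quasi-convex means $(M,M)$-quasi-convex; $A$ is $C$-path connected if any two of its points are joined by a path in $\mathcal N_C(A)$. Tight algebraic network: $G$ is an $M$-tight algebraic network with respect to $\mathcal H$ (and $\mathcal H$ forms a tight algebraic network inside $G$ if this holds for some $M$) if $\mathcal H$ is a collection of $M$-quasi-convex subgroups whose union generates a finite-index subgroup of $G$, and for any $H,H'\in\mathcal H$ there is a finite sequence $H=H_1,\dots,H_k=H'$ in $\mathcal H$ with each $H_i\cap H_{i+1}$ infinite and $M$-path connected. Tight network: a metric space $X$ is a $(\tau,\eta)$-tight network with respect to $\mathcal L$ if each $L\in\mathcal L$ is $(\tau,\eta)$-quasi-convex, $X=\bigcup_{L\in\mathcal L}\mathcal N_\tau(L)$,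 and for any $L,L'\in\mathcal L$ and any $x$ with $B(x,3\tau)$ meeting both $L$ and $L'$ there is a sequence $L=L_1,\dots,L_k=L'$ in $\mathcal L$, $k\le\eta$, with each $\mathcal N_\tau(L_i)\cap\mathcal N_\tau(L_{i+1})$ of infinite diameter, $\eta$-path connected and meeting $B(x,\eta)$. *)

theory Defs
  imports "HOL-Algebra.Algebra"
begin

definition word_length :: "('a, 'b) monoid_scheme \<Rightarrow> 'a set \<Rightarrow> 'a \<Rightarrow> nat" where
  "word_length G S g =
     (LEAST n. \<exists>ws. length ws = n \<and> set ws \<subseteq> S \<union> m_inv G ` S \<and>
                     foldr (\<lambda>a b. a \<otimes>\<^bsub>G\<^esub> b) ws \<one>\<^bsub>G\<^esub> = g)"

definition word_dist :: "('a, 'b) monoid_scheme \<Rightarrow> 'a set \<Rightarrow> 'a \<Rightarrow> 'a \<Rightarrow> real" where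
  "word_dist G S x y = real (word_length G S (inv\<^bsub>G\<^esub> x \<otimes>\<^bsub>G\<^esub> y))"

definition nbhd :: "('a \<Rightarrow> 'a \<Rightarrow> real) \<Rightarrow> 'a set \<Rightarrow> real \<Rightarrow> 'a set \<Rightarrow> 'a set" where
  "nbhd d Sp R A = {x \<in> Sp. \<exists>a \<in> A. d x a < R}"

definition oball :: "('a \<Rightarrow> 'a \<Rightarrow> real) \<Rightarrow> 'a set \<Rightarrow> 'a \<Rightarrow> real \<Rightarrow> 'a set" where
  "oball d Sp x R = {y \<in> Sp. d x y < R}"

definition quasi_geodesic ::
  "('a \<Rightarrow> 'a \<Rightarrow> real) \<Rightarrow> 'a set \<Rightarrow> real \<Rightarrow> real \<Rightarrow> real set \<Rightarrow> (real \<Rightarrow> 'a) \<Rightarrow> bool" where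
  "quasi_geodesic d Sp lam kap I q \<longleftrightarrow>
     connected I \<and> q ` I \<subseteq> Sp \<and>
     (\<forall>s\<in>I. \<forall>t\<in>I. \<bar>s - t\<bar> / lam - kap \<le> d (q s) (q t) \<and>
                   d (q s) (q t) \<le> lam * \<bar>s - t\<bar> + kap)"

definition quasi_convex ::
  "('a \<Rightarrow> 'a \<Rightarrow> real) \<Rightarrow> 'a set \<Rightarrow> real \<Rightarrow> real \<Rightarrow> 'a set \<Rightarrow> bool" where
  "quasi_convex d Sp C L A \<longleftrightarrow>
     (\<forall>x\<in>A. \<forall>y\<in>A. \<exists>a b q. a \<le> b \<and> quasi_geodesic d Sp L L {a..b} q \<and>
        q a = x \<and> q b = y \<and> q ` {a..b} \<subseteq> nbhd d Sp C A)"

text \<open>Paths in the (discrete) group with its word metric: sequences of points with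
  consecutive points at distance at most 1 (i.e. edge paths in the Cayley graph).\<close>
definition path_conn ::
  "('a \<Rightarrow> 'a \<Rightarrow> real) \<Rightarrow> 'a set \<Rightarrow> real \<Rightarrow> 'a set \<Rightarrow> bool" where
  "path_conn d Sp C A \<longleftrightarrow>
     (\<forall>x\<in>A. \<forall>y\<in>A. \<exists>ps. ps \<noteq> [] \<and> hd ps = x \<and> last ps = y \<and>
        set ps \<subseteq> nbhd d Sp C A \<and>
        (\<forall>i. Suc i < length ps \<longrightarrow> d (ps ! i) (ps ! Suc i) \<le> 1))"

definition infinite_diameter :: "('a \<Rightarrow> 'a \<Rightarrow> real) \<Rightarrow> 'a set \<Rightarrow> bool" where
  "infinite_diameter d A \<longleftrightarrow> \<not> (\<exists>B. \<forall>x\<in>A. \<forall>y\<in>A. d x y \<le> B)"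

definition tight_network ::
  "('a \<Rightarrow> 'a \<Rightarrow> real) \<Rightarrow> 'a set \<Rightarrow> real \<Rightarrow> real \<Rightarrow> 'a set set \<Rightarrow> bool" where
  "tight_network d Sp tau eta \<L> \<longleftrightarrow>
     (\<forall>L\<in>\<L>. quasi_convex d Sp tau eta L) \<and>
     Sp = (\<Union>L\<in>\<L>. nbhd d Sp tau L) \<and>
     (\<forall>L\<in>\<L>. \<forall>L'\<in>\<L>. \<forall>x\<in>Sp.
        oball d Sp x (3 * tau) \<inter> L \<noteq> {} \<and> oball d Sp x (3 * tau) \<inter> L' \<noteq> {} \<longrightarrow>
        (\<exists>Ls. Ls \<noteq> [] \<and> hd Ls = L \<and> last Ls = L' \<and> real (length Ls) \<le> eta \<and>
              set Ls \<subseteq> \<L> \<and>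
              (\<forall>i. Suc i < length Ls \<longrightarrow>
                 (let I = nbhd d Sp tau (Ls ! i) \<inter> nbhd d Sp tau (Ls ! Suc i) in
                    infinite_diameter d I \<and> path_conn d Sp eta I \<and>
                    I \<inter> oball d Sp x eta \<noteq> {}))))"

definition tight_alg_network ::
  "('a, 'b) monoid_scheme \<Rightarrow> 'a set \<Rightarrow> real \<Rightarrow> 'a set set \<Rightarrow> bool" where
  "tight_alg_network G S M \<H> \<longleftrightarrow>
     (\<forall>H\<in>\<H>. subgroup H G \<and> quasi_convex (word_dist G S) (carrier G) M M H) \<and>
     finite (rcosets\<^bsub>G\<^esub> (generate G (\<Union>\<H>))) \<and>
     (\<forall>H\<in>\<H>. \<forall>H'\<in>\<H>. \<exists>Hs. Hs \<noteq> [] \<and> hd Hs = H \<and> last Hs = H' \<and> set Hs \<subseteq> \<H> \<and>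
        (\<forall>i. Suc i < length Hs \<longrightarrow>
           infinite (Hs ! i \<inter> Hs ! Suc i) \<and>
           path_conn (word_dist G S) (carrier G) M (Hs ! i \<inter> Hs ! Suc i)))"

end

theory Submission
  imports Defs
begin

text \<open>The members of \<open>\<H>\<close> are quasi-convex subgroups, so each is generated by its elements in one
  fixed finite ball, and \<open>\<H>\<close> is finite. Hence every quantity the tight-network axioms need bounded is a
  maximum over finitely many cases: the covering radius of the finite-index subgroup \<open>G1\<close>, the distance
  from a point near two members of \<open>\<H>\<close> to their intersection, the lengths of the connecting sequences
  in \<open>\<H>\<close>, and the lengths of words over \<open>\<Union>\<H>\<close> for the finitely many short elements of \<open>G1\<close>.

  Cosets \<open>cH\<close> and \<open>cH'\<close> are joined by translating a connecting sequence from \<open>H\<close> to \<open>H'\<close>: the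
  neighbourhoods of \<open>cK\<close> and \<open>cK'\<close> meet in a translate of a set lying uniformly near the infinite,
  path-connected \<open>K \<inter> K'\<close>. Cosets \<open>yH\<close> and \<open>y'H'\<close> near a common point differ by a short element
  \<open>y\<inverse>y' = h\<^sub>1 \<cdots> h\<^sub>m\<close> with letters in \<open>\<Union>\<H>\<close>; since \<open>cK = (c h) K\<close> for \<open>h \<in> K\<close>, walking along the
  prefixes of this word concatenates such chains with a common representative.\<close>

lemma finite_common_bound:
  fixes Q :: "'c \<Rightarrow> real \<Rightarrow> bool"
  assumes "finite A" and "\<forall>a\<in>A. \<exists>B. Q a B" and "\<And>a B B'. Q a B \<Longrightarrow> B \<le> B' \<Longrightarrow> Q a B'"
  shows "\<exists>B. \<forall>a\<in>A. Q a B"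
  using assms(1,2)
proof (induction A rule: finite_induct)
  case (insert x F)
  then obtain B1 B2 where "\<forall>a\<in>F. Q a B1" "Q x B2" by auto
  then have "\<forall>a\<in>insert x F. Q a (max B1 B2)"
    using assms(3) by (metis insert_iff max.cobounded1 max.cobounded2)
  then show ?case by blast
qed simp

lemma finite_common_bound2:
  fixes Q :: "'c \<Rightarrow> 'c \<Rightarrow> real \<Rightarrow> bool"
  assumes "finite A" and "\<And>a b. a \<in> A \<Longrightarrow> b \<in> A \<Longrightarrow> \<exists>B. Q a b B"
    and "\<And>a b B B'. Q a b B \<Longrightarrow> B \<le> B' \<Longrightarrow> Q a b B'"
  shows "\<exists>B. \<forall>a\<in>A. \<forall>b\<in>A. Q a b B"
proof -
  have "\<exists>B. \<forall>ab\<in>A \<times> A. Q (fst ab) (snd ab) B"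
    by (rule finite_common_bound) (use assms in auto)
  then show ?thesis by auto
qed

lemma successively_propagate:
  assumes "successively P xs" "xs \<noteq> []" "Q (hd xs)"
    and "\<And>u v. u \<in> set xs \<Longrightarrow> v \<in> set xs \<Longrightarrow> P u v \<Longrightarrow> Q u \<Longrightarrow> Q v"
  shows "Q (last xs)"
  using assms
proof (induction xs)
  case (Cons a xs)
  show ?case
  proof (cases xs)
    case (Cons b ys)
    then have "Q (hd xs)" using Cons.prems(1,3,4) by (auto simp: successively_Cons)
    then have "Q (last xs)"
      by (intro Cons.IH) (use Cons.prems(1,4) \<open>xs = b # ys\<close> in \<open>auto simp: successively_Cons\<close>)
    then show ?thesis using \<open>xs = b # ys\<close> by simp
  qed (use Cons.prems in simp)
qed simp

lemma nbhd_subset: "nbhd d Sp r A \<subseteq> Sp"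
  unfolding nbhd_def by auto

lemma nbhd_mono: "r \<le> r' \<Longrightarrow> A \<subseteq> B \<Longrightarrow> nbhd d Sp r A \<subseteq> nbhd d Sp r' B"
  unfolding nbhd_def by (fastforce intro: order_less_le_trans)

lemma quasi_geodesic_dist_le:
  "quasi_geodesic d Sp lam kap I q \<Longrightarrow> s \<in> I \<Longrightarrow> t \<in> I \<Longrightarrow> d (q s) (q t) \<le> lam * \<bar>s - t\<bar> + kap"
  unfolding quasi_geodesic_def by blast

lemma quasi_geodesic_mono:
  assumes "quasi_geodesic d Sp lam kap I q" and "0 < lam" "lam \<le> lam'" "kap \<le> kap'"
  shows "quasi_geodesic d Sp lam' kap' I q"
  unfolding quasi_geodesic_def
proof (intro conjI ballI)
  fix s t assume st: "s \<in> I" "t \<in> I"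
  have "\<bar>s - t\<bar> / lam' \<le> \<bar>s - t\<bar> / lam" and "lam * \<bar>s - t\<bar> \<le> lam' * \<bar>s - t\<bar>"
    using assms(2,3) by (auto intro: divide_left_mono mult_right_mono)
  then show "\<bar>s - t\<bar> / lam' - kap' \<le> d (q s) (q t)" "d (q s) (q t) \<le> lam' * \<bar>s - t\<bar> + kap'"
    using assms(1,4) st unfolding quasi_geodesic_def by fastforce+
qed (use assms(1) in \<open>auto simp: quasi_geodesic_def\<close>)

lemma quasi_convexD:
  assumes "quasi_convex d Sp C L A" "x \<in> A" "y \<in> A"
  obtains a b q where "a \<le> b" "quasi_geodesic d Sp L L {a..b} q" "q a = x" "q b = y"
    "q ` {a..b} \<subseteq> nbhd d Sp C A"
  using assms unfolding quasi_convex_def by blast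

lemma quasi_convex_mono:
  assumes "quasi_convex d Sp C L A" and "0 < L" "C \<le> C'" "L \<le> L'"
  shows "quasi_convex d Sp C' L' A"
  unfolding quasi_convex_def
proof (intro ballI)
  fix x y assume "x \<in> A" "y \<in> A"
  then obtain a b q where "a \<le> b" "quasi_geodesic d Sp L L {a..b} q" "q a = x" "q b = y"
      "q ` {a..b} \<subseteq> nbhd d Sp C A"
    using quasi_convexD[OF assms(1)] by metis
  then show "\<exists>a b q. a \<le> b \<and> quasi_geodesic d Sp L' L' {a..b} q \<and> q a = x \<and> q b = y \<and>
      q ` {a..b} \<subseteq> nbhd d Sp C' A"
    using quasi_geodesic_mono[of d Sp L L _ _ L' L'] nbhd_mono[of C C' A A d Sp] assms(2-4) by blast
qed

lemma path_conn_iff: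
  "path_conn d Sp C A \<longleftrightarrow> (\<forall>x\<in>A. \<forall>y\<in>A. \<exists>ps. ps \<noteq> [] \<and> hd ps = x \<and> last ps = y \<and>
     set ps \<subseteq> nbhd d Sp C A \<and> successively (\<lambda>a b. d a b \<le> 1) ps)"
  unfolding path_conn_def successively_conv_nth ..

text \<open>The condition the tight-network axiom imposes on consecutive members of a connecting sequence.\<close>
definition linked ::
  "('a \<Rightarrow> 'a \<Rightarrow> real) \<Rightarrow> 'a set \<Rightarrow> real \<Rightarrow> real \<Rightarrow> 'a \<Rightarrow> 'a set \<Rightarrow> 'a set \<Rightarrow> bool" where
  "linked d Sp tau eta x L L' \<longleftrightarrow>
     (let I = nbhd d Sp tau L \<inter> nbhd d Sp tau L' in
        infinite_diameter d I \<and> path_conn d Sp eta I \<and> I \<inter> oball d Sp x eta \<noteq> {})"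

definition linked_chain ::
  "('a \<Rightarrow> 'a \<Rightarrow> real) \<Rightarrow> 'a set \<Rightarrow> real \<Rightarrow> real \<Rightarrow> 'a set set \<Rightarrow> 'a \<Rightarrow> real \<Rightarrow> 'a set \<Rightarrow> 'a set \<Rightarrow> bool"
  where
  "linked_chain d Sp tau eta \<L> x n L L' \<longleftrightarrow>
     (\<exists>Ls. Ls \<noteq> [] \<and> hd Ls = L \<and> last Ls = L' \<and> real (length Ls) \<le> n \<and> set Ls \<subseteq> \<L> \<and>
        successively (linked d Sp tau eta x) Ls)"

lemma linked_chain_mono:
  "linked_chain d Sp tau eta \<L> x m L L' \<Longrightarrow> m \<le> n \<Longrightarrow> linked_chain d Sp tau eta \<L> x n L L'"
  unfolding linked_chain_def by (auto intro: order_trans)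

lemma linked_chain_trans:
  assumes "linked_chain d Sp tau eta \<L> x m L1 L2" and "linked_chain d Sp tau eta \<L> x n L2 L3"
  shows "linked_chain d Sp tau eta \<L> x (m + n) L1 L3"
proof -
  obtain Ls1 Ls2 where 1: "Ls1 \<noteq> []" "hd Ls1 = L1" "last Ls1 = L2" "real (length Ls1) \<le> m"
      "set Ls1 \<subseteq> \<L>" "successively (linked d Sp tau eta x) Ls1"
    and 2: "Ls2 \<noteq> []" "hd Ls2 = L2" "last Ls2 = L3" "real (length Ls2) \<le> n"
      "set Ls2 \<subseteq> \<L>" "successively (linked d Sp tau eta x) Ls2"
    using assms unfolding linked_chain_def by blast
  then obtain rest where rest: "Ls2 = L2 # rest" by (cases Ls2) auto
  have "last (Ls1 @ rest) = L3" using 1 2 rest by (cases "rest = []") auto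
  then show ?thesis
    unfolding linked_chain_def using 1 2 rest
    by (intro exI[of _ "Ls1 @ rest"]) (auto simp: successively_append_iff successively_Cons)
qed

lemma tight_networkI:
  assumes "\<And>L. L \<in> \<L> \<Longrightarrow> quasi_convex d Sp tau eta L"
    and "Sp \<subseteq> (\<Union>L\<in>\<L>. nbhd d Sp tau L)"
    and "\<And>L L' x. L \<in> \<L> \<Longrightarrow> L' \<in> \<L> \<Longrightarrow> x \<in> Sp \<Longrightarrow>
           oball d Sp x (3 * tau) \<inter> L \<noteq> {} \<Longrightarrow> oball d Sp x (3 * tau) \<inter> L' \<noteq> {} \<Longrightarrow>
           linked_chain d Sp tau eta \<L> x eta L L'"
  shows "tight_network d Sp tau eta \<L>"
proof -
  have "(\<Union>L\<in>\<L>. nbhd d Sp tau L) \<subseteq> Sp" unfolding nbhd_def by auto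
  then show ?thesis
    using assms unfolding tight_network_def linked_chain_def linked_def successively_conv_nth
    by (intro conjI ballI impI) (blast, blast, metis)
qed

lemma (in group) mult_inv_eq_if_inv_mult_eq:
  assumes "x \<in> carrier G" "y \<in> carrier G" "a \<in> carrier G" "b \<in> carrier G"
    and "inv a \<otimes> x = inv b \<otimes> y"
  shows "x \<otimes> inv y = a \<otimes> inv b"
proof -
  have "x \<otimes> inv y = a \<otimes> (inv a \<otimes> x) \<otimes> inv y" using assms(1-4) by (simp add: m_assoc[symmetric])
  also have "\<dots> = a \<otimes> (inv b \<otimes> y) \<otimes> inv y" using assms(5) by simp
  also have "\<dots> = a \<otimes> inv b" using assms(1-4) by (simp add: m_assoc)
  finally show ?thesis .
qed

definition word_prod :: "('a, 'b) monoid_scheme \<Rightarrow> 'a list \<Rightarrow> 'a" where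
  "word_prod G ws = foldr (\<lambda>a b. a \<otimes>\<^bsub>G\<^esub> b) ws \<one>\<^bsub>G\<^esub>"

locale word_metric = group G for G (structure) +
  fixes S :: "'a set"
  assumes finite_gens: "finite S" and gens_carrier: "S \<subseteq> carrier G"
    and generate_gens: "generate G S = carrier G"
begin

abbreviation letters :: "'a set" where "letters \<equiv> S \<union> m_inv G ` S"
abbreviation wl :: "'a \<Rightarrow> nat" where "wl \<equiv> word_length G S"
abbreviation d :: "'a \<Rightarrow> 'a \<Rightarrow> real" where "d \<equiv> word_dist G S"

lemma letters_carrier: "letters \<subseteq> carrier G"
  using gens_carrier by auto

lemma letters_inv_closed: "a \<in> letters \<Longrightarrow> inv a \<in> letters"
  using gens_carrier by (auto simp: subsetD)

lemma word_prod_Nil [simp]: "word_prod G [] = \<one>"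
  by (simp add: word_prod_def)

lemma word_prod_Cons [simp]: "word_prod G (w # ws) = w \<otimes> word_prod G ws"
  by (simp add: word_prod_def)

lemma word_prod_closed: "set ws \<subseteq> carrier G \<Longrightarrow> word_prod G ws \<in> carrier G"
  by (induction ws) auto

lemma word_prod_append:
  "set xs \<subseteq> carrier G \<Longrightarrow> set ys \<subseteq> carrier G \<Longrightarrow>
   word_prod G (xs @ ys) = word_prod G xs \<otimes> word_prod G ys"
  by (induction xs) (auto simp: m_assoc word_prod_closed)

lemma word_prod_rev_inv:
  "set ws \<subseteq> carrier G \<Longrightarrow> word_prod G (rev (map (m_inv G) ws)) = inv (word_prod G ws)"
proof (induction ws)
  case (Cons a ws)
  have "set (rev (map (m_inv G) ws)) \<subseteq> carrier G" using Cons.prems by auto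
  then have "word_prod G (rev (map (m_inv G) (a # ws))) = word_prod G (rev (map (m_inv G) ws)) \<otimes> inv a"
    using Cons.prems by (simp add: word_prod_append)
  then show ?case using Cons by (simp add: inv_mult_group word_prod_closed)
qed simp

lemma generate_word_prod:
  assumes "B \<subseteq> carrier G" and "x \<in> generate G B"
  shows "\<exists>ws. set ws \<subseteq> B \<union> m_inv G ` B \<and> word_prod G ws = x"
  using assms(2)
proof (induction rule: generate.induct)
  case one show ?case by (intro exI[of _ "[]"]) auto
next
  case (incl h) then show ?case using assms(1) by (intro exI[of _ "[h]"]) auto
next
  case (inv h) then show ?case using assms(1) by (intro exI[of _ "[inv h]"]) auto
next
  case (eng h1 h2)
  then obtain w1 w2 where "set w1 \<subseteq> B \<union> m_inv G ` B" "word_prod G w1 = h1"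
      "set w2 \<subseteq> B \<union> m_inv G ` B" "word_prod G w2 = h2" by blast
  moreover from calculation have "set w1 \<subseteq> carrier G" "set w2 \<subseteq> carrier G" using assms(1) by auto
  ultimately show ?case by (intro exI[of _ "w1 @ w2"]) (auto simp: word_prod_append)
qed

lemma word_length_eq: "wl x = (LEAST n. \<exists>ws. length ws = n \<and> set ws \<subseteq> letters \<and> word_prod G ws = x)"
  unfolding word_length_def word_prod_def ..

lemma word_length_le: "set ws \<subseteq> letters \<Longrightarrow> wl (word_prod G ws) \<le> length ws"
  unfolding word_length_eq by (rule Least_le) blast

lemma word_length_attained:
  assumes "x \<in> carrier G"
  obtains ws where "set ws \<subseteq> letters" "word_prod G ws = x" "length ws = wl x"
proof -
  have "\<exists>n ws. length ws = n \<and> set ws \<subseteq> letters \<and> word_prod G ws = x"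
    using generate_word_prod[OF gens_carrier] assms generate_gens by blast
  from LeastI_ex[OF this] show ?thesis using that unfolding word_length_eq by blast
qed

lemma word_length_one: "wl \<one> = 0"
  using word_length_le[of "[]"] by simp

lemma word_length_letter: "s \<in> letters \<Longrightarrow> wl s \<le> 1"
  using word_length_le[of "[s]"] letters_carrier by auto

lemma word_length_mult:
  assumes "x \<in> carrier G" "y \<in> carrier G"
  shows "wl (x \<otimes> y) \<le> wl x + wl y"
proof -
  obtain v w where "set v \<subseteq> letters" "word_prod G v = x" "length v = wl x"
      "set w \<subseteq> letters" "word_prod G w = y" "length w = wl y"
    using word_length_attained assms by metis
  then show ?thesis
    using word_length_le[of "v @ w"] letters_carrier by (auto simp: word_prod_append)
qed

lemma word_length_inv:
  assumes "x \<in> carrier G"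
  shows "wl (inv x) = wl x"
proof -
  have le: "wl (inv y) \<le> wl y" if y: "y \<in> carrier G" for y
  proof -
    obtain w where w: "set w \<subseteq> letters" "word_prod G w = y" "length w = wl y"
      using word_length_attained[OF y] by blast
    have "set (rev (map (m_inv G) w)) \<subseteq> letters"
      using w(1) letters_inv_closed by auto
    moreover have "word_prod G (rev (map (m_inv G) w)) = inv y"
      using w letters_carrier word_prod_rev_inv[of w] by auto
    ultimately show ?thesis
      using word_length_le[of "rev (map (m_inv G) w)"] w(3) by simp
  qed
  show ?thesis using le[of x] le[of "inv x"] assms by simp
qed

lemma dist_eq: "d x y = real (wl (inv x \<otimes> y))"
  by (simp add: word_dist_def)

lemma dist_nonneg: "0 \<le> d x y"
  by (simp add: dist_eq)

lemma dist_self: "x \<in> carrier G \<Longrightarrow> d x x = 0"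
  by (simp add: dist_eq word_length_one)

lemma dist_one_left: "y \<in> carrier G \<Longrightarrow> d \<one> y = wl y"
  by (simp add: dist_eq)

lemma dist_sym: "x \<in> carrier G \<Longrightarrow> y \<in> carrier G \<Longrightarrow> d x y = d y x"
  using word_length_inv[of "inv x \<otimes> y"] by (simp add: dist_eq inv_mult_group)

lemma dist_triangle:
  assumes "x \<in> carrier G" "y \<in> carrier G" "z \<in> carrier G"
  shows "d x z \<le> d x y + d y z"
proof -
  have "inv x \<otimes> z = (inv x \<otimes> y) \<otimes> (inv y \<otimes> z)"
    using assms by (simp add: m_assoc[symmetric]) (simp add: m_assoc)
  then show ?thesis using word_length_mult[of "inv x \<otimes> y" "inv y \<otimes> z"] assms by (simp add: dist_eq)
qed

lemma dist_translate:
  assumes "g \<in> carrier G" "x \<in> carrier G" "y \<in> carrier G"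
  shows "d (g \<otimes> x) (g \<otimes> y) = d x y"
proof -
  have "inv (g \<otimes> x) \<otimes> (g \<otimes> y) = inv x \<otimes> y"
    using assms by (simp add: inv_mult_group m_assoc[symmetric]) (simp add: m_assoc)
  then show ?thesis by (simp add: dist_eq)
qed

lemma finite_dist_le:
  assumes "x \<in> carrier G"
  shows "finite {y \<in> carrier G. d x y \<le> r}"
proof -
  let ?words = "{ws. set ws \<subseteq> letters \<and> length ws \<le> nat \<lfloor>r\<rfloor>}"
  have "{y \<in> carrier G. d x y \<le> r} \<subseteq> (\<lambda>ws. x \<otimes> word_prod G ws) ` ?words"
  proof
    fix y assume y: "y \<in> {y \<in> carrier G. d x y \<le> r}"
    obtain ws where ws: "set ws \<subseteq> letters" "word_prod G ws = inv x \<otimes> y"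
        "length ws = wl (inv x \<otimes> y)"
      by (rule word_length_attained[of "inv x \<otimes> y"]) (use assms y in auto)
    have "real (length ws) \<le> r" using ws(3) y by (simp add: dist_eq)
    then have "length ws \<le> nat \<lfloor>r\<rfloor>" by linarith
    then have "ws \<in> ?words" using ws(1) by blast
    moreover have "y = x \<otimes> word_prod G ws" using assms y ws(2) by (simp add: m_assoc[symmetric])
    ultimately show "y \<in> (\<lambda>ws. x \<otimes> word_prod G ws) ` ?words" by blast
  qed
  moreover have "finite ?words" using finite_gens by (intro finite_lists_length_le) auto
  ultimately show ?thesis using finite_subset by blast
qed

lemma infinite_diameter_if_infinite:
  assumes "A \<subseteq> carrier G" and "infinite A"
  shows "infinite_diameter d A"
  unfolding infinite_diameter_def
proof
  assume "\<exists>B. \<forall>x\<in>A. \<forall>y\<in>A. d x y \<le> B"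
  then obtain B where B: "\<forall>x\<in>A. \<forall>y\<in>A. d x y \<le> B" by blast
  obtain x where x: "x \<in> A" using assms(2) by (metis ex_in_conv finite.emptyI)
  then have "A \<subseteq> {y \<in> carrier G. d x y \<le> B}" using B assms(1) by auto
  then show False using finite_dist_le[of x B] x assms finite_subset by blast
qed

lemma word_path:
  assumes "set ws \<subseteq> letters" and "x \<in> carrier G"
  shows "\<exists>ps. ps \<noteq> [] \<and> hd ps = x \<and> last ps = x \<otimes> word_prod G ws \<and> set ps \<subseteq> carrier G \<and>
           (\<forall>p\<in>set ps. d x p \<le> length ws) \<and> successively (\<lambda>a b. d a b \<le> 1) ps"
  using assms
proof (induction ws arbitrary: x)
  case Nil then show ?case by (intro exI[of _ "[x]"]) (auto simp: dist_self)
next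
  case (Cons w ws)
  have w: "w \<in> carrier G" "w \<in> letters" and ws: "set ws \<subseteq> carrier G"
    using Cons.prems letters_carrier by auto
  have xw: "x \<otimes> w \<in> carrier G" using w Cons.prems by simp
  obtain ps where ps: "ps \<noteq> []" "hd ps = x \<otimes> w" "last ps = x \<otimes> w \<otimes> word_prod G ws"
      "set ps \<subseteq> carrier G" "\<forall>p\<in>set ps. d (x \<otimes> w) p \<le> length ws" "successively (\<lambda>a b. d a b \<le> 1) ps"
    using Cons.IH[OF _ xw] Cons.prems by auto
  have "d x (x \<otimes> w) = d (x \<otimes> \<one>) (x \<otimes> w)" using Cons.prems by simp
  also have "\<dots> = d \<one> w" using Cons.prems w by (intro dist_translate) auto
  also have "\<dots> = wl w" using w by (simp add: dist_one_left)
  finally have step: "d x (x \<otimes> w) \<le> 1" using word_length_letter[OF w(2)] by simp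
  have "d x p \<le> length (w # ws)" if "p \<in> set (x # ps)" for p
    using dist_triangle[of x "x \<otimes> w" p] step ps(4,5) that Cons.prems xw
    by (fastforce simp: dist_self)
  moreover have "last (x # ps) = x \<otimes> word_prod G (w # ws)"
    using ps Cons.prems w ws by (simp add: m_assoc word_prod_closed)
  moreover have "successively (\<lambda>a b. d a b \<le> 1) (x # ps)"
    using ps step by (cases ps) (auto simp: successively_Cons)
  moreover have "set (x # ps) \<subseteq> carrier G" using ps(4) Cons.prems by simp
  ultimately show ?case by (intro exI[of _ "x # ps"]) auto
qed

lemma geodesic_path:
  assumes "x \<in> carrier G" "y \<in> carrier G"
  shows "\<exists>ps. ps \<noteq> [] \<and> hd ps = x \<and> last ps = y \<and> set ps \<subseteq> carrier G \<and>
           (\<forall>p\<in>set ps. d x p \<le> d x y) \<and> successively (\<lambda>a b. d a b \<le> 1) ps"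
proof -
  obtain ws where ws: "set ws \<subseteq> letters" "word_prod G ws = inv x \<otimes> y" "length ws = wl (inv x \<otimes> y)"
    by (rule word_length_attained[of "inv x \<otimes> y"]) (use assms in auto)
  have "x \<otimes> word_prod G ws = y" using ws assms by (simp add: m_assoc[symmetric])
  moreover have "real (length ws) = d x y" using ws by (simp add: dist_eq)
  ultimately show ?thesis using word_path[OF ws(1) assms(1)] by simp
qed

lemma subset_nbhd:
  assumes "A \<subseteq> carrier G" "0 < r"
  shows "A \<subseteq> nbhd d (carrier G) r A"
proof
  fix a assume "a \<in> A"
  then show "a \<in> nbhd d (carrier G) r A"
    using assms dist_self[of a] unfolding nbhd_def by (auto intro!: bexI[of _ a])
qed

lemma l_coset_image: "g <# A = (\<lambda>a. g \<otimes> a) ` A"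
  unfolding l_coset_def by auto

lemma l_coset_Int:
  assumes "g \<in> carrier G" "A \<subseteq> carrier G" "B \<subseteq> carrier G"
  shows "g <# (A \<inter> B) = (g <# A) \<inter> (g <# B)"
proof
  show "(g <# A) \<inter> (g <# B) \<subseteq> g <# (A \<inter> B)"
  proof
    fix z assume "z \<in> (g <# A) \<inter> (g <# B)"
    then obtain a b where ab: "a \<in> A" "b \<in> B" "z = g \<otimes> a" "z = g \<otimes> b"
      unfolding l_coset_image by blast
    then have "a = b" using assms l_cancel[of g a b] by auto
    then show "z \<in> g <# (A \<inter> B)" using ab unfolding l_coset_image by blast
  qed
qed (auto simp: l_coset_image)

lemma infinite_l_coset:
  assumes "g \<in> carrier G" "A \<subseteq> carrier G" "infinite A"
  shows "infinite (g <# A)"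
proof
  assume "finite (g <# A)"
  moreover have "inj_on (\<lambda>a. g \<otimes> a) A" using assms l_cancel by (intro inj_onI) (meson subsetD)
  ultimately show False using assms(3) finite_imageD by (auto simp: l_coset_image)
qed

lemma nbhd_l_coset:
  assumes g: "g \<in> carrier G" and Y: "Y \<subseteq> carrier G"
  shows "nbhd d (carrier G) r (g <# Y) = g <# nbhd d (carrier G) r Y"
proof (intro equalityI subsetI)
  fix z assume "z \<in> nbhd d (carrier G) r (g <# Y)"
  then obtain y where z: "z \<in> carrier G" "y \<in> Y" "d z (g \<otimes> y) < r"
    unfolding nbhd_def l_coset_image by blast
  have "d (inv g \<otimes> z) y = d (g \<otimes> (inv g \<otimes> z)) (g \<otimes> y)"
    using g Y z by (intro dist_translate[symmetric]) auto
  also have "\<dots> = d z (g \<otimes> y)" using g z by (simp add: m_assoc[symmetric])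
  finally have "inv g \<otimes> z \<in> nbhd d (carrier G) r Y"
    using g z unfolding nbhd_def by (auto intro!: bexI[of _ y])
  moreover have "z = g \<otimes> (inv g \<otimes> z)" using g z by (simp add: m_assoc[symmetric])
  ultimately show "z \<in> g <# nbhd d (carrier G) r Y" unfolding l_coset_image by blast
next
  fix z assume "z \<in> g <# nbhd d (carrier G) r Y"
  then obtain w y where w: "z = g \<otimes> w" "w \<in> carrier G" "y \<in> Y" "d w y < r"
    unfolding nbhd_def l_coset_image by blast
  then show "z \<in> nbhd d (carrier G) r (g <# Y)"
    using g Y dist_translate[of g w y] unfolding nbhd_def l_coset_image
    by (auto intro!: bexI[of _ y])
qed

lemma quasi_geodesic_translate:
  assumes "g \<in> carrier G" and "quasi_geodesic d (carrier G) lam kap I q"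
  shows "quasi_geodesic d (carrier G) lam kap I (\<lambda>t. g \<otimes> q t)"
proof -
  have "q ` I \<subseteq> carrier G" using assms(2) unfolding quasi_geodesic_def by blast
  then have "d (g \<otimes> q s) (g \<otimes> q t) = d (q s) (q t)" if "s \<in> I" "t \<in> I" for s t
    using assms(1) that by (intro dist_translate) auto
  then show ?thesis using assms unfolding quasi_geodesic_def by auto
qed

lemma quasi_convex_l_coset:
  assumes g: "g \<in> carrier G" and A: "A \<subseteq> carrier G" and qc: "quasi_convex d (carrier G) C L A"
  shows "quasi_convex d (carrier G) C L (g <# A)"
  unfolding quasi_convex_def
proof (intro ballI)
  fix x y assume "x \<in> g <# A" "y \<in> g <# A"
  then obtain x0 y0 where xy: "x0 \<in> A" "y0 \<in> A" "x = g \<otimes> x0" "y = g \<otimes> y0"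
    unfolding l_coset_image by blast
  obtain a b q where q: "a \<le> b" "quasi_geodesic d (carrier G) L L {a..b} q" "q a = x0"
      "q b = y0" "q ` {a..b} \<subseteq> nbhd d (carrier G) C A"
    by (rule quasi_convexD[OF qc xy(1,2)])
  have "(\<lambda>t. g \<otimes> q t) ` {a..b} \<subseteq> nbhd d (carrier G) C (g <# A)"
    using q(5) unfolding nbhd_l_coset[OF g A] unfolding l_coset_image by auto
  then show "\<exists>a b q. a \<le> b \<and> quasi_geodesic d (carrier G) L L {a..b} q \<and> q a = x \<and> q b = y \<and>
      q ` {a..b} \<subseteq> nbhd d (carrier G) C (g <# A)"
    using quasi_geodesic_translate[OF g q(2)] q xy by (intro exI[of _ a] exI[of _ b]) auto
qed

lemma path_conn_l_coset:
  assumes g: "g \<in> carrier G" and Y: "Y \<subseteq> carrier G" and pc: "path_conn d (carrier G) C Y"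
  shows "path_conn d (carrier G) C (g <# Y)"
  unfolding path_conn_iff
proof (intro ballI)
  fix x y assume "x \<in> g <# Y" "y \<in> g <# Y"
  then obtain x0 y0 where xy: "x0 \<in> Y" "y0 \<in> Y" "x = g \<otimes> x0" "y = g \<otimes> y0"
    unfolding l_coset_image by blast
  then obtain ps where ps: "ps \<noteq> []" "hd ps = x0" "last ps = y0" "set ps \<subseteq> nbhd d (carrier G) C Y"
      "successively (\<lambda>a b. d a b \<le> 1) ps"
    using pc unfolding path_conn_iff by blast
  have "set ps \<subseteq> carrier G" using ps(4) unfolding nbhd_def by auto
  then have "successively (\<lambda>a b. d (g \<otimes> a) (g \<otimes> b) \<le> 1) ps"
    using g by (intro successively_mono[OF ps(5)]) (auto simp: dist_translate subset_iff)
  then have "successively (\<lambda>a b. d a b \<le> 1) (map (\<lambda>p. g \<otimes> p) ps)"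
    by (simp add: successively_map)
  moreover have "set (map (\<lambda>p. g \<otimes> p) ps) \<subseteq> nbhd d (carrier G) C (g <# Y)"
    using ps(4) unfolding nbhd_l_coset[OF g Y] unfolding l_coset_image by auto
  ultimately show "\<exists>ps. ps \<noteq> [] \<and> hd ps = x \<and> last ps = y \<and> set ps \<subseteq> nbhd d (carrier G) C (g <# Y) \<and>
      successively (\<lambda>a b. d a b \<le> 1) ps"
    using ps xy by (intro exI[of _ "map (\<lambda>p. g \<otimes> p) ps"]) (simp add: hd_map last_map)
qed

lemma geodesic_path_in_ball:
  assumes "x \<in> carrier G" "y \<in> carrier G" "d x y < r"
  shows "\<exists>ps. ps \<noteq> [] \<and> hd ps = x \<and> last ps = y \<and> set ps \<subseteq> nbhd d (carrier G) r {x} \<and>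
           successively (\<lambda>a b. d a b \<le> 1) ps"
proof -
  obtain ps where ps: "ps \<noteq> []" "hd ps = x" "last ps = y" "set ps \<subseteq> carrier G"
      "\<forall>w\<in>set ps. d x w \<le> d x y" "successively (\<lambda>a b. d a b \<le> 1) ps"
    using geodesic_path[OF assms(1,2)] by blast
  have "set ps \<subseteq> nbhd d (carrier G) r {x}"
  proof
    fix w assume w: "w \<in> set ps"
    then have wc: "w \<in> carrier G" using ps(4) by blast
    then have "d w x = d x w" using dist_sym assms(1) by blast
    also have "\<dots> \<le> d x y" using ps(5) w by blast
    finally have "d w x < r" using assms(3) by linarith
    then show "w \<in> nbhd d (carrier G) r {x}" using wc unfolding nbhd_def by blast
  qed
  then show ?thesis using ps by blast
qed

text \<open>Join the endpoints to the core \<open>Y\<close> by short geodesics and travel inside the core.\<close>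
lemma path_conn_if_near_path_conn_subset:
  assumes YI: "Y \<subseteq> I" and I: "I \<subseteq> carrier G" and pc: "path_conn d (carrier G) M Y"
    and near: "\<And>p. p \<in> I \<Longrightarrow> \<exists>y\<in>Y. d p y < R" and "M \<le> eta" "R \<le> eta"
  shows "path_conn d (carrier G) eta I"
  unfolding path_conn_iff
proof (intro ballI)
  fix p p' assume p: "p \<in> I" and p': "p' \<in> I"
  obtain y y' where y: "y \<in> Y" "d p y < R" and y': "y' \<in> Y" "d p' y' < R"
    using near p p' by blast
  have car: "p \<in> carrier G" "p' \<in> carrier G" "y \<in> carrier G" "y' \<in> carrier G"
    using p p' y y' YI I by auto
  obtain ps1 where ps1: "ps1 \<noteq> []" "hd ps1 = p" "last ps1 = y" "set ps1 \<subseteq> nbhd d (carrier G) R {p}"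
      "successively (\<lambda>a b. d a b \<le> 1) ps1"
    using geodesic_path_in_ball[OF car(1,3) y(2)] by blast
  obtain ps2 where ps2: "ps2 \<noteq> []" "hd ps2 = y" "last ps2 = y'" "set ps2 \<subseteq> nbhd d (carrier G) M Y"
      "successively (\<lambda>a b. d a b \<le> 1) ps2"
    using pc y y' unfolding path_conn_iff by blast
  have "d y' p' < R" using y'(2) dist_sym car by simp
  then obtain ps3 where ps3: "ps3 \<noteq> []" "hd ps3 = y'" "last ps3 = p'"
      "set ps3 \<subseteq> nbhd d (carrier G) R {y'}" "successively (\<lambda>a b. d a b \<le> 1) ps3"
    using geodesic_path_in_ball[OF car(4,2)] by blast
  have "{p} \<subseteq> I" "{y'} \<subseteq> I" using p y'(1) YI by auto
  then have "nbhd d (carrier G) R {p} \<subseteq> nbhd d (carrier G) eta I"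
      "nbhd d (carrier G) R {y'} \<subseteq> nbhd d (carrier G) eta I"
      "nbhd d (carrier G) M Y \<subseteq> nbhd d (carrier G) eta I"
    using nbhd_mono \<open>R \<le> eta\<close> \<open>M \<le> eta\<close> YI by (metis, metis, metis)
  then have "set (ps1 @ ps2 @ ps3) \<subseteq> nbhd d (carrier G) eta I"
    using ps1(4) ps2(4) ps3(4) by auto
  moreover have "successively (\<lambda>a b. d a b \<le> 1) (ps1 @ ps2 @ ps3)"
    using ps1 ps2 ps3 car by (simp add: successively_append_iff dist_self)
  ultimately show "\<exists>ps. ps \<noteq> [] \<and> hd ps = p \<and> last ps = p' \<and> set ps \<subseteq> nbhd d (carrier G) eta I \<and>
      successively (\<lambda>a b. d a b \<le> 1) ps"
    using ps1 ps3 by (intro exI[of _ "ps1 @ ps2 @ ps3"]) auto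
qed

lemma linked_l_cosets:
  assumes c: "c \<in> carrier G" and x: "x \<in> carrier G" and xc: "d x c < eta"
    and K1: "subgroup K1 G" and K2: "subgroup K2 G"
    and inf: "infinite (K1 \<inter> K2)" and pc: "path_conn d (carrier G) M (K1 \<inter> K2)"
    and "0 < tau" "M \<le> eta" "R \<le> eta"
    and near: "\<And>p. p \<in> nbhd d (carrier G) tau K1 \<inter> nbhd d (carrier G) tau K2 \<Longrightarrow>
                    \<exists>z\<in>K1 \<inter> K2. d p z < R"
  shows "linked d (carrier G) tau eta x (c <# K1) (c <# K2)"
proof -
  let ?I = "nbhd d (carrier G) tau K1 \<inter> nbhd d (carrier G) tau K2"
  have K: "K1 \<subseteq> carrier G" "K2 \<subseteq> carrier G" using K1 K2 subgroup.subset by blast+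
  have I: "?I \<subseteq> carrier G" using nbhd_subset[of d "carrier G" tau K1] by blast
  have core: "K1 \<inter> K2 \<subseteq> ?I"
    using subset_nbhd[OF K(1) \<open>0 < tau\<close>] subset_nbhd[OF K(2) \<open>0 < tau\<close>] by blast
  have cI: "nbhd d (carrier G) tau (c <# K1) \<inter> nbhd d (carrier G) tau (c <# K2) = c <# ?I"
    unfolding nbhd_l_coset[OF c K(1)] nbhd_l_coset[OF c K(2)]
    by (rule l_coset_Int[OF c nbhd_subset nbhd_subset, symmetric])
  have "infinite ?I" using inf core finite_subset by blast
  then have "infinite_diameter d (c <# ?I)"
    using infinite_l_coset[OF c I] l_coset_subset_G[OF I c] infinite_diameter_if_infinite by blast
  moreover have "path_conn d (carrier G) eta (c <# ?I)"
    using path_conn_if_near_path_conn_subset[OF core I pc near] assms(9,10) c I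
    by (intro path_conn_l_coset) auto
  moreover have "c \<in> c <# ?I"
    using core c subgroup.one_closed[OF K1] subgroup.one_closed[OF K2]
    by (auto simp: l_coset_image intro!: image_eqI[of c _ \<one>])
  then have "(c <# ?I) \<inter> oball d (carrier G) x eta \<noteq> {}"
    using xc c unfolding oball_def by auto
  ultimately show ?thesis unfolding linked_def Let_def cI by blast
qed

lemma quasi_convex_radius_pos:
  assumes "quasi_convex d (carrier G) C L A" and "x \<in> A"
  shows "0 < C"
proof -
  obtain a b q where "a \<le> b" "quasi_geodesic d (carrier G) L L {a..b} q" "q a = x" "q b = x"
      "q ` {a..b} \<subseteq> nbhd d (carrier G) C A"
    by (rule quasi_convexD[OF assms(1,2,2)])
  then have "x \<in> nbhd d (carrier G) C A" by force
  then obtain y where "d x y < C" unfolding nbhd_def by blast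
  then show ?thesis using dist_nonneg[of x y] by linarith
qed

lemma quasi_geodesic_coarse_path:
  assumes ab: "a \<le> b" and qg: "quasi_geodesic d (carrier G) L L {a..b} q"
  shows "\<exists>ps. ps \<noteq> [] \<and> hd ps = q a \<and> last ps = q b \<and> set ps \<subseteq> q ` {a..b} \<and>
           successively (\<lambda>u v. d u v \<le> 2 * L) ps"
proof -
  define n where "n = nat \<lceil>b - a\<rceil> + 1"
  have n: "1 \<le> real n" "b - a \<le> real n" unfolding n_def by linarith+
  define t where "t i = a + (b - a) * real i / real n" for i
  have t_mem: "t i \<in> {a..b}" if "i \<le> n" for i
  proof -
    have "real i / real n \<le> 1" using that n by auto
    then have "(b - a) * (real i / real n) \<le> (b - a) * 1" using ab by (intro mult_left_mono) auto
    moreover have "0 \<le> (b - a) * (real i / real n)" using ab by simp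
    ultimately show ?thesis unfolding t_def by (simp add: times_divide_eq_right)
  qed
  have t_step: "\<bar>t i - t (Suc i)\<bar> \<le> 1" for i
  proof -
    have "t (Suc i) - t i = (b - a) / real n" unfolding t_def using n by (simp add: field_simps)
    moreover have "(b - a) / real n \<le> 1" "0 \<le> (b - a) / real n" using n ab by auto
    ultimately show ?thesis by linarith
  qed
  have "d (q a) (q a) \<le> L * \<bar>a - a\<bar> + L" using quasi_geodesic_dist_le[OF qg, of a a] ab by simp
  then have L: "0 \<le> L" using dist_nonneg[of "q a" "q a"] by simp
  have "d (q (t i)) (q (t (Suc i))) \<le> 2 * L" if "i < n" for i
  proof -
    have "d (q (t i)) (q (t (Suc i))) \<le> L * \<bar>t i - t (Suc i)\<bar> + L"
      using quasi_geodesic_dist_le[OF qg, of "t i" "t (Suc i)"] t_mem that by simp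
    also have "\<dots> \<le> L * 1 + L" using t_step L by (intro add_right_mono mult_left_mono) auto
    finally show ?thesis by simp
  qed
  then have "successively (\<lambda>u v. d u v \<le> 2 * L) (map (q \<circ> t) [0..<Suc n])"
    unfolding successively_conv_nth by (simp del: upt_Suc)
  moreover have "t 0 = a" "t n = b" unfolding t_def using n by auto
  moreover have "set (map (q \<circ> t) [0..<Suc n]) \<subseteq> q ` {a..b}" using t_mem by auto
  ultimately show ?thesis
    by (intro exI[of _ "map (q \<circ> t) [0..<Suc n]"]) (simp add: hd_map last_map del: upt_Suc)
qed

lemma mem_generate_short_if_near:
  assumes H: "subgroup H G"
    and g: "g \<in> generate G (H \<inter> {z \<in> carrier G. d \<one> z < r})" and h: "h \<in> H" and "d g h < r"
  shows "h \<in> generate G (H \<inter> {z \<in> carrier G. d \<one> z < r})"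
proof -
  have gH: "g \<in> H" using g generate_subgroup_incl[OF _ H] by blast
  have car: "g \<in> carrier G" "h \<in> carrier G" using gH h subgroup.mem_carrier[OF H] by auto
  have "inv g \<otimes> h \<in> H" using gH h H by (simp add: subgroup.m_closed subgroup.m_inv_closed)
  moreover have "d \<one> (inv g \<otimes> h) < r" using car \<open>d g h < r\<close> by (simp add: dist_eq)
  ultimately have "inv g \<otimes> h \<in> generate G (H \<inter> {z \<in> carrier G. d \<one> z < r})"
    using car by (intro generate.incl) auto
  moreover have "h = g \<otimes> (inv g \<otimes> h)" using car by (simp add: m_assoc[symmetric])
  ultimately show ?thesis using g by (metis generate.eng)
qed

text \<open>Walk along a quasi-geodesic from \<open>\<one>\<close> to \<open>h\<close> in steps of length at most \<open>2M\<close>: nearest points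
  of \<open>H\<close> to consecutive steps differ by a generator of length \<open>< 4M\<close>.\<close>
lemma quasi_convex_subgroup_eq_generate_short:
  assumes H: "subgroup H G" and qc: "quasi_convex d (carrier G) M M H"
  shows "H = generate G (H \<inter> {z \<in> carrier G. d \<one> z < 4 * M})"
proof -
  let ?Gen = "generate G (H \<inter> {z \<in> carrier G. d \<one> z < 4 * M})"
  have Gen_sub: "?Gen \<subseteq> H" by (rule generate_subgroup_incl[OF _ H]) auto
  have "H \<subseteq> ?Gen"
  proof
    fix h assume h: "h \<in> H"
    have one: "\<one> \<in> H" by (rule subgroup.one_closed[OF H])
    have M: "0 < M" using quasi_convex_radius_pos[OF qc one] .
    obtain a b q where q: "a \<le> b" "quasi_geodesic d (carrier G) M M {a..b} q" "q a = \<one>" "q b = h"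
        "q ` {a..b} \<subseteq> nbhd d (carrier G) M H"
      by (rule quasi_convexD[OF qc one h])
    obtain ps where ps: "ps \<noteq> []" "hd ps = \<one>" "last ps = h" "set ps \<subseteq> nbhd d (carrier G) M H"
        "successively (\<lambda>u v. d u v \<le> 2 * M) ps"
      using quasi_geodesic_coarse_path[OF q(1,2)] q(3-5) by fastforce
    let ?Q = "\<lambda>u. \<exists>g\<in>?Gen. d u g < M"
    have base: "?Q \<one>" using M generate.one[of G] by (intro bexI[of _ \<one>]) (auto simp: dist_self)
    have step: "?Q v" if uv: "u \<in> set ps" "v \<in> set ps" "d u v \<le> 2 * M" and "?Q u" for u v
    proof -
      obtain g where g: "g \<in> ?Gen" "d u g < M" using \<open>?Q u\<close> by blast
      obtain h' where h': "h' \<in> H" "d v h' < M" "v \<in> carrier G"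
        using uv ps(4) unfolding nbhd_def by blast
      have car: "u \<in> carrier G" "g \<in> carrier G" "h' \<in> carrier G"
        using uv(1) ps(4) g(1) Gen_sub h' subgroup.mem_carrier[OF H] unfolding nbhd_def by auto
      have "d g h' \<le> d g u + d u v + d v h'"
        using dist_triangle[of g u h'] dist_triangle[of u v h'] car h' by linarith
      also have "\<dots> < 4 * M" using g(2) uv(3) h'(2) dist_sym[of g u] car by linarith
      finally have "h' \<in> ?Gen" by (rule mem_generate_short_if_near[OF H g(1) h'(1)])
      then show ?thesis using h'(2) by blast
    qed
    have "?Q (last ps)"
      by (rule successively_propagate[OF ps(5,1)]) (use base step ps(2) in auto)
    then obtain g where g: "g \<in> ?Gen" "d h g < M" using ps(3) by blast
    have "d g h < 4 * M"
      using g Gen_sub h M dist_sym[of g h] subgroup.mem_carrier[OF H] by fastforce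
    then show "h \<in> ?Gen" by (rule mem_generate_short_if_near[OF H g(1) h])
  qed
  with Gen_sub show ?thesis by blast
qed

lemma finite_quasi_convex_subgroups:
  assumes "\<And>H. H \<in> \<H> \<Longrightarrow> subgroup H G \<and> quasi_convex d (carrier G) M M H"
  shows "finite \<H>"
proof -
  let ?B = "{z \<in> carrier G. d \<one> z \<le> 4 * M}"
  have "\<H> \<subseteq> generate G ` Pow ?B"
  proof
    fix H assume "H \<in> \<H>"
    then have "H = generate G (H \<inter> {z \<in> carrier G. d \<one> z < 4 * M})"
      using assms quasi_convex_subgroup_eq_generate_short by blast
    moreover have "H \<inter> {z \<in> carrier G. d \<one> z < 4 * M} \<in> Pow ?B" by auto
    ultimately show "H \<in> generate G ` Pow ?B" by blast
  qed
  moreover have "finite ?B" by (rule finite_dist_le) simp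
  ultimately show ?thesis using finite_subset by blast
qed

lemma finite_index_cover:
  assumes K: "subgroup K G" and fin: "finite (rcosets K)"
  shows "\<exists>rho. \<forall>x\<in>carrier G. \<exists>g\<in>K. d x g < rho"
proof -
  have "\<exists>rho. \<forall>C\<in>rcosets K. \<forall>x\<in>C. \<exists>g\<in>K. d x g < rho"
  proof (rule finite_common_bound[OF fin])
    show "\<forall>C\<in>rcosets K. \<exists>rho. \<forall>x\<in>C. \<exists>g\<in>K. d x g < rho"
    proof
      fix C assume "C \<in> rcosets K"
      then obtain a where a: "a \<in> carrier G" "C = K #> a" unfolding RCOSETS_def by blast
      have "\<forall>x\<in>C. \<exists>g\<in>K. d x g < real (wl (inv a)) + 1"
      proof
        fix x assume "x \<in> C"
        then obtain h where h: "h \<in> K" "x = h \<otimes> a" using a unfolding r_coset_def by blast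
        then have "d x h = wl (inv a)"
          using a subgroup.mem_carrier[OF K] by (simp add: dist_eq inv_mult_group m_assoc)
        then show "\<exists>g\<in>K. d x g < real (wl (inv a)) + 1" using h(1) by (intro bexI[of _ h]) auto
      qed
      then show "\<exists>rho. \<forall>x\<in>C. \<exists>g\<in>K. d x g < rho" by blast
    qed
  qed (meson order_less_le_trans)
  moreover have "x \<in> K #> x" "K #> x \<in> rcosets K" if "x \<in> carrier G" for x
    using that subgroup.one_closed[OF K] unfolding r_coset_def RCOSETS_def by force+
  ultimately show ?thesis by meson
qed

text \<open>For \<open>p\<close> \<open>r\<close>-close to \<open>h \<in> H\<close> and \<open>k \<in> K\<close> only finitely many pairs \<open>(h\<inverse>p, k\<inverse>p)\<close> occur, and
  if \<open>p\<close> and \<open>p\<^sub>0\<close> give the same pair then \<open>p p\<^sub>0\<inverse> \<in> H \<inter> K\<close>, at distance \<open>|p\<^sub>0\<inverse>|\<close> from \<open>p\<close>.\<close>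
lemma near_subgroups_near_intersection:
  assumes H: "subgroup H G" and K: "subgroup K G"
  shows "\<exists>R. \<forall>p\<in>nbhd d (carrier G) r H \<inter> nbhd d (carrier G) r K. \<exists>z\<in>H \<inter> K. d p z < R"
proof -
  let ?B = "{u \<in> carrier G. d \<one> u \<le> r}"
  define Q where "Q uv R \<longleftrightarrow> (\<forall>p\<in>carrier G. \<forall>h\<in>H. \<forall>k\<in>K.
      inv h \<otimes> p = fst uv \<longrightarrow> inv k \<otimes> p = snd uv \<longrightarrow> (\<exists>z\<in>H \<inter> K. d p z < R))" for uv R
  have Hc: "H \<subseteq> carrier G" and Kc: "K \<subseteq> carrier G" using H K subgroup.subset by blast+
  have "\<exists>R. \<forall>uv\<in>?B \<times> ?B. Q uv R"
  proof (rule finite_common_bound)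
    show "finite (?B \<times> ?B)" using finite_dist_le[of \<one> r] by simp
    show "\<forall>uv\<in>?B \<times> ?B. \<exists>R. Q uv R"
    proof
      fix uv
      show "\<exists>R. Q uv R"
      proof (cases "\<exists>p0\<in>carrier G. \<exists>h0\<in>H. \<exists>k0\<in>K. inv h0 \<otimes> p0 = fst uv \<and> inv k0 \<otimes> p0 = snd uv")
        case True
        then obtain p0 h0 k0 where w: "p0 \<in> carrier G" "h0 \<in> H" "k0 \<in> K"
            "inv h0 \<otimes> p0 = fst uv" "inv k0 \<otimes> p0 = snd uv" by blast
        have "\<exists>z\<in>H \<inter> K. d p z < wl (inv p0) + 1"
          if p: "p \<in> carrier G" "h \<in> H" "k \<in> K" "inv h \<otimes> p = fst uv" "inv k \<otimes> p = snd uv" for p h k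
        proof -
          have "p \<otimes> inv p0 = h \<otimes> inv h0" "p \<otimes> inv p0 = k \<otimes> inv k0"
            using p w Hc Kc by (auto intro!: mult_inv_eq_if_inv_mult_eq)
          moreover have "h \<otimes> inv h0 \<in> H" "k \<otimes> inv k0 \<in> K"
            using p w H K by (simp_all add: subgroup.m_closed subgroup.m_inv_closed)
          moreover have "d p (p \<otimes> inv p0) = wl (inv p0)"
            using p w by (simp add: dist_eq m_assoc[symmetric])
          ultimately show ?thesis by (intro bexI[of _ "p \<otimes> inv p0"]) auto
        qed
        then show ?thesis unfolding Q_def by blast
      qed (auto simp: Q_def)
    qed
  qed (unfold Q_def, blast intro: order_less_le_trans)
  then obtain R where R: "\<forall>uv\<in>?B \<times> ?B. Q uv R" by blast
  have "\<exists>z\<in>H \<inter> K. d p z < R" if p: "p \<in> nbhd d (carrier G) r H \<inter> nbhd d (carrier G) r K" for p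
  proof -
    obtain h k where hk: "p \<in> carrier G" "h \<in> H" "k \<in> K" "d p h < r" "d p k < r"
      using p unfolding nbhd_def by blast
    have "d \<one> (inv h \<otimes> p) = d p h" "d \<one> (inv k \<otimes> p) = d p k"
      using hk Hc Kc dist_sym[of p h] dist_sym[of p k] by (auto simp: dist_eq)
    then have "(inv h \<otimes> p, inv k \<otimes> p) \<in> ?B \<times> ?B" using hk Hc Kc by auto
    then show ?thesis using R hk unfolding Q_def by fastforce
  qed
  then show ?thesis by blast
qed

lemma word_length_prefix_le:
  "set ws \<subseteq> carrier G \<Longrightarrow> wl (word_prod G (take k ws)) \<le> sum_list (map wl ws)"
proof (induction ws arbitrary: k)
  case (Cons a ws)
  show ?case
  proof (cases k)
    case (Suc k')
    have "set (take k' ws) \<subseteq> carrier G" using Cons.prems set_take_subset by fastforce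
    then have "wl (a \<otimes> word_prod G (take k' ws)) \<le> wl a + wl (word_prod G (take k' ws))"
      using Cons.prems by (intro word_length_mult word_prod_closed) auto
    moreover have "wl (word_prod G (take k' ws)) \<le> sum_list (map wl ws)"
      using Cons by simp
    ultimately show ?thesis using Suc by simp
  qed (simp add: word_length_one)
qed (simp add: word_length_one)

lemma finite_words_bound:
  assumes "B \<subseteq> carrier G" and "finite F" and "F \<subseteq> generate G B"
  shows "\<exists>W. \<forall>s\<in>F. \<exists>ws. set ws \<subseteq> B \<union> m_inv G ` B \<and> word_prod G ws = s \<and> real (length ws) \<le> W \<and>
                         (\<forall>k. real (wl (word_prod G (take k ws))) \<le> W)"
proof (rule finite_common_bound[OF assms(2)])
  show "\<forall>s\<in>F. \<exists>W ws. set ws \<subseteq> B \<union> m_inv G ` B \<and> word_prod G ws = s \<and> real (length ws) \<le> W \<and>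
                        (\<forall>k. real (wl (word_prod G (take k ws))) \<le> W)"
  proof
    fix s assume "s \<in> F"
    then obtain ws where ws: "set ws \<subseteq> B \<union> m_inv G ` B" "word_prod G ws = s"
      using generate_word_prod assms(1,3) by blast
    then have "set ws \<subseteq> carrier G" using assms(1) by auto
    then have "real (wl (word_prod G (take k ws))) \<le> real (length ws) + real (sum_list (map wl ws))" for k
      using word_length_prefix_le[of ws k] by linarith
    then show "\<exists>W ws. set ws \<subseteq> B \<union> m_inv G ` B \<and> word_prod G ws = s \<and> real (length ws) \<le> W \<and>
                        (\<forall>k. real (wl (word_prod G (take k ws))) \<le> W)"
      using ws by (intro exI[of _ "real (length ws) + real (sum_list (map wl ws))"] exI[of _ ws]) auto
  qed
qed (blast intro: order_trans)

end

text \<open>The bounds on \<open>\<eta>\<close> are what \<open>chain_near_cosets\<close> needs: the representatives used there stay within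
  \<open>3\<tau> + W\<close> of the base point, and the chain has at most \<open>(W + 1) D\<close> members.\<close>
locale coset_network = word_metric G S for G (structure) and S +
  fixes \<H> :: "'a set set" and M tau eta R D W :: real
  assumes subgroups: "\<And>H. H \<in> \<H> \<Longrightarrow> subgroup H G"
    and quasi_convex_members: "\<And>H. H \<in> \<H> \<Longrightarrow> quasi_convex (word_dist G S) (carrier G) M M H"
    and nonempty: "\<H> \<noteq> {}"
    and M_pos: "0 < M" and M_le_tau: "M \<le> tau" and M_le_eta: "M \<le> eta"
    and cover: "\<And>x. x \<in> carrier G \<Longrightarrow> \<exists>g\<in>generate G (\<Union>\<H>). word_dist G S x g < tau"
    and near_intersection: "\<And>H K p. H \<in> \<H> \<Longrightarrow> K \<in> \<H> \<Longrightarrow>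
           p \<in> nbhd (word_dist G S) (carrier G) tau H \<inter> nbhd (word_dist G S) (carrier G) tau K \<Longrightarrow>
           \<exists>z\<in>H \<inter> K. word_dist G S p z < R"
    and R_le_eta: "R \<le> eta"
    and chains: "\<And>H H'. H \<in> \<H> \<Longrightarrow> H' \<in> \<H> \<Longrightarrow>
           \<exists>Hs. Hs \<noteq> [] \<and> hd Hs = H \<and> last Hs = H' \<and> set Hs \<subseteq> \<H> \<and> real (length Hs) \<le> D \<and>
             successively (\<lambda>K K'. infinite (K \<inter> K') \<and> path_conn (word_dist G S) (carrier G) M (K \<inter> K')) Hs"
    and short_words: "\<And>s. s \<in> generate G (\<Union>\<H>) \<Longrightarrow> word_dist G S \<one> s \<le> 6 * tau \<Longrightarrow>
           \<exists>ws. set ws \<subseteq> \<Union>\<H> \<and> word_prod G ws = s \<and> real (length ws) \<le> W \<and>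
             (\<forall>k. real (word_length G S (word_prod G (take k ws))) \<le> W)"
    and prefix_bound: "3 * tau + W \<le> eta" and chain_bound: "(W + 1) * D \<le> eta"
begin

abbreviation G1 :: "'a set" where "G1 \<equiv> generate G (\<Union>\<H>)"
abbreviation cosets :: "'a set set" where "cosets \<equiv> {g <# H | g H. g \<in> G1 \<and> H \<in> \<H>}"
abbreviation chain :: "'a \<Rightarrow> real \<Rightarrow> 'a set \<Rightarrow> 'a set \<Rightarrow> bool" where
  "chain \<equiv> linked_chain d (carrier G) tau eta cosets"

lemma Union_carrier: "\<Union>\<H> \<subseteq> carrier G"
  using subgroups subgroup.subset by blast

lemma G1_subgroup: "subgroup G1 G"
  by (rule generate_is_subgroup[OF Union_carrier])

lemma G1_carrier: "g \<in> G1 \<Longrightarrow> g \<in> carrier G"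
  using subgroup.mem_carrier[OF G1_subgroup] .

lemma member_subset_G1: "H \<in> \<H> \<Longrightarrow> H \<subseteq> G1"
  by (auto intro: generate.incl)

lemma tau_pos: "0 < tau"
  using M_pos M_le_tau by linarith

lemma D_nonneg: "0 \<le> D"
  using chains nonempty by fastforce

lemma chain_l_cosets:
  assumes c: "c \<in> G1" and x: "x \<in> carrier G" and xc: "d x c < eta" and H: "H \<in> \<H>" "H' \<in> \<H>"
  shows "chain x D (c <# H) (c <# H')"
proof -
  obtain Hs where Hs: "Hs \<noteq> []" "hd Hs = H" "last Hs = H'" "set Hs \<subseteq> \<H>" "real (length Hs) \<le> D"
      "successively (\<lambda>K K'. infinite (K \<inter> K') \<and> path_conn d (carrier G) M (K \<inter> K')) Hs"
    using chains[OF H] by blast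
  have "linked d (carrier G) tau eta x (c <# K) (c <# K')"
    if "K \<in> set Hs" "K' \<in> set Hs" "infinite (K \<inter> K') \<and> path_conn d (carrier G) M (K \<inter> K')" for K K'
  proof -
    have "K \<in> \<H>" "K' \<in> \<H>" using that Hs(4) by auto
    then show ?thesis
      using that(3) near_intersection[of K K']
      by (intro linked_l_cosets[OF G1_carrier[OF c] x xc _ _ _ _ tau_pos M_le_eta R_le_eta])
        (auto intro: subgroups)
  qed
  then have "successively (linked d (carrier G) tau eta x) (map (\<lambda>K. c <# K) Hs)"
    unfolding successively_map by (rule successively_mono[OF Hs(6)])
  then show ?thesis
    unfolding linked_chain_def using Hs c
    by (intro exI[of _ "map (\<lambda>K. c <# K) Hs"]) (auto simp: hd_map last_map)
qed

lemma chain_along_word: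
  "set ws \<subseteq> \<Union>\<H> \<Longrightarrow> c \<in> G1 \<Longrightarrow> H \<in> \<H> \<Longrightarrow> H' \<in> \<H> \<Longrightarrow> x \<in> carrier G \<Longrightarrow>
   (\<forall>k\<le>length ws. d x (c \<otimes> word_prod G (take k ws)) < eta) \<Longrightarrow>
   chain x ((real (length ws) + 1) * D) (c <# H) ((c \<otimes> word_prod G ws) <# H')"
proof (induction ws arbitrary: c H)
  case Nil
  then show ?case using chain_l_cosets[of c x H H'] G1_carrier by (auto dest: spec[of _ 0])
next
  case (Cons w ws)
  obtain K where K: "K \<in> \<H>" "w \<in> K" using Cons.prems(1) by auto
  have c: "c \<in> carrier G" using G1_carrier Cons.prems(2) .
  have w: "w \<in> carrier G" using subgroup.mem_carrier[OF subgroups[OF K(1)] K(2)] .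
  have ws: "set ws \<subseteq> carrier G" using Cons.prems(1) Union_carrier by auto
  have "d x c < eta" using Cons.prems(6) c by (auto dest: spec[of _ 0])
  then have first: "chain x D (c <# H) (c <# K)"
    using chain_l_cosets Cons.prems(2,3,5) K(1) by blast
  have "c <# K = (c \<otimes> w) <# K"
    using K c w subgroups by (intro l_repr_independence) (auto simp: l_coset_image)
  moreover have "c \<otimes> w \<in> G1" using Cons.prems(2) K by (auto intro: generate.eng generate.incl)
  moreover have "\<forall>k\<le>length ws. d x ((c \<otimes> w) \<otimes> word_prod G (take k ws)) < eta"
  proof (intro allI impI)
    fix k assume "k \<le> length ws"
    then have "d x (c \<otimes> word_prod G (take (Suc k) (w # ws))) < eta" using Cons.prems(6) by fastforce
    moreover have "set (take k ws) \<subseteq> carrier G" using ws set_take_subset by fast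
    ultimately show "d x ((c \<otimes> w) \<otimes> word_prod G (take k ws)) < eta"
      using c w by (simp add: m_assoc word_prod_closed)
  qed
  ultimately have "chain x ((real (length ws) + 1) * D) (c <# K) ((c \<otimes> w \<otimes> word_prod G ws) <# H')"
    using Cons.IH[of "c \<otimes> w" K] Cons.prems K by simp
  moreover have "c \<otimes> w \<otimes> word_prod G ws = c \<otimes> word_prod G (w # ws)"
    using c w ws by (simp add: m_assoc word_prod_closed)
  ultimately have "chain x (D + (real (length ws) + 1) * D) (c <# H) ((c \<otimes> word_prod G (w # ws)) <# H')"
    using linked_chain_trans[OF first] by simp
  then show ?case by (simp add: algebra_simps)
qed

lemma coset_rep:
  assumes "L \<in> cosets" and "y \<in> L"
  obtains H where "H \<in> \<H>" "y \<in> G1" "L = y <# H"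
proof -
  obtain g H where gH: "L = g <# H" "g \<in> G1" "H \<in> \<H>" using assms(1) by blast
  then obtain h where h: "h \<in> H" "y = g \<otimes> h" using assms(2) unfolding l_coset_image by blast
  then have "y \<in> G1"
    using gH member_subset_G1 subgroup.m_closed[OF G1_subgroup] by blast
  moreover have "L = y <# H"
    using gH assms(2) G1_carrier subgroups by (metis l_repr_independence)
  ultimately show ?thesis using that gH(3) by blast
qed

text \<open>Two cosets meeting \<open>B(x, 3\<tau>)\<close> at \<open>y\<close> and \<open>y'\<close> are related by the short element \<open>y\<inverse>y'\<close> of \<open>G1\<close>;
  following one of its short words moves the base point of the coset only within \<open>B(x, \<eta>)\<close>.\<close>
lemma chain_near_cosets:
  assumes L: "L \<in> cosets" "L' \<in> cosets" and x: "x \<in> carrier G"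
    and meet: "oball d (carrier G) x (3 * tau) \<inter> L \<noteq> {}" "oball d (carrier G) x (3 * tau) \<inter> L' \<noteq> {}"
  shows "chain x eta L L'"
proof -
  obtain y y' where y: "y \<in> carrier G" "d x y < 3 * tau" "y \<in> L"
    and y': "y' \<in> carrier G" "d x y' < 3 * tau" "y' \<in> L'"
    using meet unfolding oball_def by blast
  obtain H where H: "H \<in> \<H>" "y \<in> G1" "L = y <# H" using coset_rep[OF L(1) y(3)] .
  obtain H' where H': "H' \<in> \<H>" "y' \<in> G1" "L' = y' <# H'" using coset_rep[OF L(2) y'(3)] .
  have "inv y \<otimes> y' \<in> G1"
    using H(2) H'(2) G1_subgroup by (simp add: subgroup.m_closed subgroup.m_inv_closed)
  moreover have "d \<one> (inv y \<otimes> y') \<le> 6 * tau"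
    using dist_triangle[OF y(1) x y'(1)] dist_sym[OF x y(1)] y y' by (simp add: dist_eq)
  ultimately obtain ws where ws: "set ws \<subseteq> \<Union>\<H>" "word_prod G ws = inv y \<otimes> y'" "real (length ws) \<le> W"
      "\<forall>k. real (wl (word_prod G (take k ws))) \<le> W"
    using short_words by blast
  have "d x (y \<otimes> word_prod G (take k ws)) < eta" for k
  proof -
    have p: "word_prod G (take k ws) \<in> carrier G"
      using ws(1) Union_carrier set_take_subset by (intro word_prod_closed) fast
    then have "d y (y \<otimes> word_prod G (take k ws)) = wl (word_prod G (take k ws))"
      using y(1) by (simp add: dist_eq m_assoc[symmetric])
    moreover have "d x (y \<otimes> word_prod G (take k ws)) \<le> d x y + d y (y \<otimes> word_prod G (take k ws))"
      using dist_triangle[OF x y(1)] p y(1) by blast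
    ultimately show ?thesis using y(2) ws(4)[rule_format, of k] prefix_bound by linarith
  qed
  then have "chain x ((real (length ws) + 1) * D) (y <# H) ((y \<otimes> word_prod G ws) <# H')"
    using chain_along_word[OF ws(1) H(2) H(1) H'(1) x] by blast
  moreover have "y \<otimes> word_prod G ws = y'" using ws(2) y y' by (simp add: m_assoc[symmetric])
  ultimately have "chain x ((real (length ws) + 1) * D) L L'" using H(3) H'(3) by simp
  moreover have "(real (length ws) + 1) * D \<le> eta"
    using ws(3) D_nonneg chain_bound mult_right_mono[of "real (length ws) + 1" "W + 1" D] by linarith
  ultimately show ?thesis by (rule linked_chain_mono)
qed

theorem tight_network: "tight_network d (carrier G) tau eta cosets"
proof (rule tight_networkI)
  fix L assume "L \<in> cosets"
  then obtain g H where gH: "L = g <# H" "g \<in> G1" "H \<in> \<H>" by blast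
  have "quasi_convex d (carrier G) M M (g <# H)"
    using gH quasi_convex_members subgroup.subset[OF subgroups[OF gH(3)]] G1_carrier
    by (intro quasi_convex_l_coset) auto
  then show "quasi_convex d (carrier G) tau eta L"
    using gH M_pos M_le_tau M_le_eta by (auto intro: quasi_convex_mono)
next
  obtain H0 where H0: "H0 \<in> \<H>" using nonempty by blast
  show "carrier G \<subseteq> (\<Union>L\<in>cosets. nbhd d (carrier G) tau L)"
  proof
    fix x assume x: "x \<in> carrier G"
    then obtain g where g: "g \<in> G1" "d x g < tau" using cover by blast
    then have "x \<in> nbhd d (carrier G) tau (g <# H0)"
      using x subgroup.one_closed[OF subgroups[OF H0]] G1_carrier[OF g(1)]
      unfolding nbhd_def l_coset_image by (auto intro!: bexI[of _ \<one>])
    then show "x \<in> (\<Union>L\<in>cosets. nbhd d (carrier G) tau L)" using g H0 by blast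
  qed
qed (rule chain_near_cosets)

end

context word_metric
begin

lemma Union_subgroups_inv_closed:
  assumes "\<And>H. H \<in> \<H> \<Longrightarrow> subgroup H G"
  shows "\<Union>\<H> \<union> m_inv G ` \<Union>\<H> = \<Union>\<H>"
  using assms subgroup.m_inv_closed by fastforce

lemma finite_near_intersection_bound:
  assumes fin: "finite \<H>" and sub: "\<And>H. H \<in> \<H> \<Longrightarrow> subgroup H G"
  shows "\<exists>R. \<forall>H\<in>\<H>. \<forall>K\<in>\<H>.
           \<forall>p\<in>nbhd d (carrier G) r H \<inter> nbhd d (carrier G) r K. \<exists>z\<in>H \<inter> K. d p z < R"
proof (rule finite_common_bound2[OF fin])
  fix H K assume "H \<in> \<H>" "K \<in> \<H>"
  then show "\<exists>R. \<forall>p\<in>nbhd d (carrier G) r H \<inter> nbhd d (carrier G) r K. \<exists>z\<in>H \<inter> K. d p z < R"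
    using near_subgroups_near_intersection sub by blast
qed (blast intro: order_less_le_trans)

lemma tight_alg_network_chain_bound:
  assumes net: "tight_alg_network G S M \<H>" and fin: "finite \<H>"
  shows "\<exists>D. \<forall>H\<in>\<H>. \<forall>H'\<in>\<H>. \<exists>Hs. Hs \<noteq> [] \<and> hd Hs = H \<and> last Hs = H' \<and> set Hs \<subseteq> \<H> \<and>
           real (length Hs) \<le> D \<and>
           successively (\<lambda>K K'. infinite (K \<inter> K') \<and> path_conn d (carrier G) M (K \<inter> K')) Hs"
proof (rule finite_common_bound2[OF fin])
  fix H H' assume "H \<in> \<H>" "H' \<in> \<H>"
  then obtain Hs where "Hs \<noteq> [] \<and> hd Hs = H \<and> last Hs = H' \<and> set Hs \<subseteq> \<H> \<and>
      successively (\<lambda>K K'. infinite (K \<inter> K') \<and> path_conn d (carrier G) M (K \<inter> K')) Hs"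
    using net unfolding tight_alg_network_def successively_conv_nth by blast
  then show "\<exists>D Hs. Hs \<noteq> [] \<and> hd Hs = H \<and> last Hs = H' \<and> set Hs \<subseteq> \<H> \<and> real (length Hs) \<le> D \<and>
      successively (\<lambda>K K'. infinite (K \<inter> K') \<and> path_conn d (carrier G) M (K \<inter> K')) Hs"
    by blast
qed (blast intro: order_trans)

lemma coset_network_exists:
  assumes net: "tight_alg_network G S M \<H>" and ne: "\<H> \<noteq> {}"
  shows "\<exists>tau eta R D W. coset_network G S \<H> M tau eta R D W"
proof -
  have sub: "\<And>H. H \<in> \<H> \<Longrightarrow> subgroup H G" and qc: "\<And>H. H \<in> \<H> \<Longrightarrow> quasi_convex d (carrier G) M M H"
    using net unfolding tight_alg_network_def by auto
  obtain H0 where H0: "H0 \<in> \<H>" using ne by blast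
  have M: "0 < M" using quasi_convex_radius_pos[OF qc[OF H0] subgroup.one_closed[OF sub[OF H0]]] .
  have fin: "finite \<H>" using finite_quasi_convex_subgroups sub qc by blast
  have UH: "\<Union>\<H> \<subseteq> carrier G" using sub subgroup.subset by blast
  let ?G1 = "generate G (\<Union>\<H>)"
  have "finite (rcosets ?G1)" using net unfolding tight_alg_network_def by blast
  from finite_index_cover[OF generate_is_subgroup[OF UH] this]
  obtain rho where rho: "\<forall>x\<in>carrier G. \<exists>g\<in>?G1. d x g < rho" ..
  define tau where "tau = max M rho"
  have cover: "\<exists>g\<in>?G1. d x g < tau" if "x \<in> carrier G" for x
    using bspec[OF rho that] unfolding tau_def by (meson less_max_iff_disj)
  from finite_near_intersection_bound[OF fin sub]
  obtain R where R: "\<forall>H\<in>\<H>. \<forall>K\<in>\<H>.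
      \<forall>p\<in>nbhd d (carrier G) tau H \<inter> nbhd d (carrier G) tau K. \<exists>z\<in>H \<inter> K. d p z < R" ..
  from tight_alg_network_chain_bound[OF net fin]
  obtain D where D: "\<forall>H\<in>\<H>. \<forall>H'\<in>\<H>. \<exists>Hs. Hs \<noteq> [] \<and> hd Hs = H \<and> last Hs = H' \<and> set Hs \<subseteq> \<H> \<and>
      real (length Hs) \<le> D \<and>
      successively (\<lambda>K K'. infinite (K \<inter> K') \<and> path_conn d (carrier G) M (K \<inter> K')) Hs" ..
  obtain W where W: "\<forall>s\<in>?G1 \<inter> {s \<in> carrier G. d \<one> s \<le> 6 * tau}. \<exists>ws. set ws \<subseteq> \<Union>\<H> \<and>
      word_prod G ws = s \<and> real (length ws) \<le> W \<and> (\<forall>k. real (wl (word_prod G (take k ws))) \<le> W)"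
    using finite_words_bound[OF UH, of "?G1 \<inter> {s \<in> carrier G. d \<one> s \<le> 6 * tau}"]
      finite_dist_le[of \<one> "6 * tau"] Union_subgroups_inv_closed[OF sub] by auto
  have G1_sub: "?G1 \<subseteq> carrier G" using generate_is_subgroup[OF UH] subgroup.subset by blast
  define eta where "eta = max (max M R) (max (3 * tau + W) ((W + 1) * D))"
  have "coset_network G S \<H> M tau eta R D W"
  proof (intro coset_network.intro word_metric_axioms coset_network_axioms.intro)
    show "\<And>x. x \<in> carrier G \<Longrightarrow> \<exists>g\<in>?G1. d x g < tau" by (rule cover)
  qed (use sub qc ne M R D W G1_sub in \<open>auto simp: tau_def eta_def\<close>)
  then show ?thesis by blast
qed

end

theorem proposition4p3:
  fixes G :: "('a, 'b) monoid_scheme" and S :: "'a set" and \<H> :: "'a set set"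
  assumes "group G"
    and "finite S" and "S \<subseteq> carrier G" and "generate G S = carrier G"
    and "\<H> \<noteq> {}"
    and "\<exists>M. tight_alg_network G S M \<H>"
  shows "\<exists>tau eta. tau \<ge> 0 \<and> eta \<ge> 0 \<and>
           tight_network (word_dist G S) (carrier G) tau eta
             {g <#\<^bsub>G\<^esub> H | g H. g \<in> generate G (\<Union>\<H>) \<and> H \<in> \<H>}"
proof -
  interpret word_metric G S
    using assms(1-4) by (simp add: word_metric_def word_metric_axioms_def)
  obtain M tau eta R D W where "coset_network G S \<H> M tau eta R D W"
    using coset_network_exists assms(5,6) by blast
  then interpret coset_network G S \<H> M tau eta R D W .
  show ?thesis
    using tight_network tau_pos M_pos M_le_eta by (intro exI[of _ tau] exI[of _ eta]) auto
qed

end
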